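(* Let $0<q<1$, $b<q^{-1}$, $\mathrm{v}\in\mathbb{Z}_{\geq 0}$ and $0<a<q^{\mathrm{v}}$. Define, for $x\in\mathbb{Z}_{\geq0}$, $$\check{\xi}_{\mathrm{v}}(x;a,b)=\frac{(aq^{-\mathrm{v}};q)_{\mathrm{v}}}{(bq;q)_{\mathrm{v}}}\sum_{k=0}^{\mathrm{v}}\frac{(q^{-\mathrm{v}};q)_k\,(a^{-1}bq^{\mathrm{v}+1};q)_k}{(a^{-1}q;q)_k\,(q;q)_k}\,q^{(x+1)k}.$$ Then $\check{\xi}_{\mathrm{v}}(x;a,b)>0$ for all $x\in\mathbb{Z}_{\geq 0}$.
   Context: $(z;q)_k=\prod_{i=0}^{k-1}(1-zq^i)$, $(z;q)_0=1$. The function $\check{\xi}_{\mathrm{v}}(x;a,b)$ equals the little $q$-Jacobi polynomial in universal normalisation, $\check{P}_{\mathrm{v}}(x;a,b)=\frac{(a^{-1}q^{-\mathrm{v}};q)_{\mathrm{v}}}{(bq;q)_{\mathrm{v}}}\,{}_2\phi_1(q^{-\mathrm{v}},abq^{\mathrm{v}+1};aq;q;q^{x+1})$, with $a$ replaced by $a^{-1}$ (the "virtual state polynomial"). The case $b=0$ is included (little $q$-Laguerre case). *)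

theory Defs
  imports Complex_Main
begin

definition qpoch :: "real \<Rightarrow> real \<Rightarrow> nat \<Rightarrow> real" where
  "qpoch z q k = (\<Prod>i<k. 1 - z * q ^ i)"

definition xi_check :: "real \<Rightarrow> nat \<Rightarrow> nat \<Rightarrow> real \<Rightarrow> real \<Rightarrow> real" where
  "xi_check q v x a b =
     qpoch (a / q ^ v) q v / qpoch (b * q) q v *
     (\<Sum>k\<le>v. qpoch (1 / q ^ v) q k * qpoch (b * q ^ (v + 1) / a) q k
              / (qpoch (q / a) q k * qpoch q q k) * q ^ ((x + 1) * k))"

end

theory Submission
  imports Defs
begin

(* The sum in xi_check is S(z) = 2phi1(q^-v, B; C; q, z) at z = q^(x+1), with B = b q^(v+1) / a and
   C = q / a, and the prefactor is positive. At z = q the q-Chu-Vandermonde identity gives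
   S(q) = prod_(i<v) (B - C q^i) / (1 - C q^i), a product of quotients of two negative numbers.
   The q-difference S(z) - S(q z) is z K times a series of the same shape with v - 1, a / q, b q,
   where K < 0 as soon as B > 1. By induction on v: if B <= 1 all terms of S(q^(x+1)) are
   nonnegative and the constant term is 1; otherwise S(q^(y+1)) increases with y, so
   S(q^(x+1)) >= S(q) > 0. *)

lemma qpoch_0 [simp]: "qpoch z q 0 = 1"
  by (simp add: qpoch_def)

lemma qpoch_Suc: "qpoch z q (Suc k) = qpoch z q k * (1 - z * q ^ k)"
  by (simp add: qpoch_def)

lemma qpoch_Suc_shift: "qpoch z q (Suc k) = (1 - z) * qpoch (z * q) q k"
  unfolding qpoch_def by (subst prod.lessThan_Suc_shift) (simp add: mult.assoc)

lemma qpoch_add: "qpoch z q (m + n) = qpoch z q m * qpoch (z * q ^ m) q n"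
  by (induction n) (simp_all add: qpoch_Suc power_add mult.assoc)

lemma qpoch_pos:
  assumes "\<And>i. i < k \<Longrightarrow> z * q ^ i < 1"
  shows "qpoch z q k > 0"
  unfolding qpoch_def using assms by (intro prod_pos) simp

lemma mult_power_le_max:
  fixes q z :: real
  assumes "0 \<le> q" "q \<le> 1"
  shows "z * q ^ i \<le> max z 0"
proof -
  have "q ^ i \<le> 1" "0 \<le> q ^ i" using assms by (simp_all add: power_le_one)
  then show ?thesis
    by (cases "z \<le> 0") (auto simp: mult_nonpos_nonneg mult_left_le)
qed

lemma qpoch_pos_of_less_one:
  assumes "0 \<le> q" "q \<le> 1" "z < 1"
  shows "qpoch z q k > 0"
  using mult_power_le_max[OF assms(1,2), of z] assms(3)
  by (intro qpoch_pos) (smt (verit))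

lemma qpoch_nonneg_of_le_one:
  assumes "0 \<le> q" "q \<le> 1" "z \<le> 1"
  shows "qpoch z q k \<ge> 0"
  unfolding qpoch_def using mult_power_le_max[OF assms(1,2), of z] assms(3)
  by (intro prod_nonneg) (smt (verit))

lemma qpoch_ne_zero:
  assumes "\<And>i. i < k \<Longrightarrow> 1 < z * q ^ i"
  shows "qpoch z q k \<noteq> 0"
  unfolding qpoch_def using assms by (auto simp: prod_zero_iff) (metis less_irrefl)

definition chu_sum :: "real \<Rightarrow> nat \<Rightarrow> real \<Rightarrow> real \<Rightarrow> real" where
  "chu_sum q n B C = (\<Sum>k\<le>n. qpoch (1 / q ^ n) q k * qpoch B q k * qpoch (C * q ^ k) q (n - k)
      / qpoch q q k * q ^ k)"

(* Each summand is split with the q-Pascal rule (x/q;q)_k = (x;q)_k - (x/q)(1 - q^k)(x;q)_(k-1). *)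
lemma chu_sum_Suc:
  assumes q: "0 < q" "q < 1"
  shows "chu_sum q (Suc n) B C = (1 - C * q ^ n) * chu_sum q n B C - (1 - B) / q ^ n * chu_sum q n (B * q) (C * q)"
proof -
  define x where "x = 1 / q ^ n"
  have x_Suc: "1 / q ^ Suc n = x / q" using q by (simp add: x_def)
  have qq_pos: "qpoch q q k > 0" for k using q by (simp add: qpoch_pos_of_less_one)
  define A where "A k = qpoch x q k * qpoch B q k * qpoch (C * q ^ k) q (Suc n - k) / qpoch q q k * q ^ k" for k
  define D where "D k = (if k = 0 then 0 else - (x / q) * qpoch x q (k - 1) / qpoch q q (k - 1)
        * qpoch B q k * qpoch (C * q ^ k) q (Suc n - k) * q ^ k)" for k
  have split: "qpoch (x / q) q k * qpoch B q k * qpoch (C * q ^ k) q (Suc n - k) / qpoch q q k * q ^ k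
      = A k + D k" for k
  proof (cases k)
    case (Suc j)
    have "qpoch q q j \<noteq> 0" "1 - q * q ^ j \<noteq> 0"
      using qq_pos[of j] qq_pos[of "Suc j"] by (auto simp: qpoch_Suc)
    moreover have shift: "qpoch (x / q) q (Suc j) = (1 - x / q) * qpoch x q j"
      using q by (simp add: qpoch_Suc_shift)
    ultimately show ?thesis
      unfolding Suc A_def D_def shift by (simp add: qpoch_Suc field_simps)
  qed (simp add: A_def D_def)
  have "chu_sum q (Suc n) B C = (\<Sum>k\<le>Suc n. A k) + (\<Sum>k\<le>Suc n. D k)"
    unfolding chu_sum_def x_Suc split by (rule sum.distrib)
  also have "(\<Sum>k\<le>Suc n. A k) = (1 - C * q ^ n) * chu_sum q n B C"
  proof -
    have "A (Suc n) = 0" unfolding A_def using q by (simp add: qpoch_Suc x_def)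
    moreover have "A k = (1 - C * q ^ n) * (qpoch (1 / q ^ n) q k * qpoch B q k
      * qpoch (C * q ^ k) q (n - k) / qpoch q q k * q ^ k)" if "k \<le> n" for k
    proof -
      have "Suc n - k = Suc (n - k)" "C * q ^ k * q ^ (n - k) = C * q ^ n"
        using that by (simp_all add: mult.assoc power_add[symmetric])
      then show ?thesis unfolding A_def x_def by (simp add: qpoch_Suc)
    qed
    ultimately show ?thesis unfolding chu_sum_def by (simp add: sum_distrib_left)
  qed
  also have "(\<Sum>k\<le>Suc n. D k) = - (1 - B) / q ^ n * chu_sum q n (B * q) (C * q)"
  proof -
    have "D (Suc j) = - (1 - B) / q ^ n * (qpoch (1 / q ^ n) q j * qpoch (B * q) q j
      * qpoch (C * q * q ^ j) q (n - j) / qpoch q q j * q ^ j)" for j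
      unfolding D_def x_def using q qq_pos[of j] by (simp add: qpoch_Suc_shift field_simps mult.assoc)
    then show ?thesis unfolding chu_sum_def sum.atMost_Suc_shift by (simp add: D_def sum_distrib_left)
  qed
  finally show ?thesis using q by (simp add: field_simps)
qed

(* The q-Chu-Vandermonde identity 2phi1(q^-n, B; C; q, q) = (C/B; q)_n B^n / (C; q)_n,
   multiplied by (C; q)_n. *)
theorem chu_sum_eq_prod:
  assumes "0 < q" "q < 1"
  shows "chu_sum q n B C = (\<Prod>i<n. B - C * q ^ i)"
proof (induction n arbitrary: B C)
  case 0
  then show ?case by (simp add: chu_sum_def)
next
  case (Suc n)
  have "(\<Prod>i<n. B * q - C * q * q ^ i) = (\<Prod>i<n. q * (B - C * q ^ i))"
    by (rule prod.cong) (auto simp: algebra_simps)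
  then have "(\<Prod>i<n. B * q - C * q * q ^ i) = q ^ n * (\<Prod>i<n. B - C * q ^ i)"
    by (simp add: prod.distrib)
  then show ?case using Suc assms by (simp add: chu_sum_Suc field_simps)
qed

definition xi_series :: "real \<Rightarrow> nat \<Rightarrow> real \<Rightarrow> real \<Rightarrow> real \<Rightarrow> real" where
  "xi_series q v a b z = (\<Sum>k\<le>v. qpoch (1 / q ^ v) q k * qpoch (b * q ^ (v + 1) / a) q k
              / (qpoch (q / a) q k * qpoch q q k) * z ^ k)"

lemma xi_check_eq_xi_series:
  "xi_check q v x a b = qpoch (a / q ^ v) q v / qpoch (b * q) q v * xi_series q v a b (q ^ (x + 1))"
  unfolding xi_check_def xi_series_def power_mult ..

lemma one_less_lower_factor:
  fixes q a :: real
  assumes "0 < q" "q < 1" "0 < a" "a < q ^ v" "i < v"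
  shows "1 < q / a * q ^ i"
proof -
  have "q ^ v \<le> q ^ Suc i" using assms power_decreasing[of "Suc i" v q] by simp
  then show ?thesis using assms by (simp add: field_simps)
qed

lemma xi_series_at_q:
  assumes q: "0 < q" "q < 1" and a: "0 < a" "a < q ^ v"
  shows "xi_series q v a b q = (\<Prod>i<v. (b * q ^ (v + 1) / a - q / a * q ^ i) / (1 - q / a * q ^ i))"
proof -
  define B where "B = b * q ^ (v + 1) / a"
  define C where "C = q / a"
  have C_ne_zero: "qpoch (C * q ^ k) q m \<noteq> 0" if "k + m \<le> v" for k m
    using one_less_lower_factor[OF q a] that
    by (intro qpoch_ne_zero) (simp add: C_def power_add[symmetric] mult.assoc)
  have "xi_series q v a b q = chu_sum q v B C / qpoch C q v"
    unfolding xi_series_def chu_sum_def sum_divide_distrib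
  proof (rule sum.cong)
    fix k assume "k \<in> {..v}"
    then have split: "qpoch C q v = qpoch C q k * qpoch (C * q ^ k) q (v - k)"
      using qpoch_add[of C q k "v - k"] by simp
    have "qpoch C q k \<noteq> 0" "qpoch (C * q ^ k) q (v - k) \<noteq> 0"
      using C_ne_zero[of 0 k] C_ne_zero[of k "v - k"] \<open>k \<in> {..v}\<close> by auto
    then show "qpoch (1 / q ^ v) q k * qpoch (b * q ^ (v + 1) / a) q k / (qpoch (q / a) q k * qpoch q q k) * q ^ k =
         qpoch (1 / q ^ v) q k * qpoch B q k * qpoch (C * q ^ k) q (v - k) / qpoch q q k * q ^ k / qpoch C q v"
      by (subst split) (simp add: B_def C_def field_simps)
  qed simp
  also have "\<dots> = (\<Prod>i<v. (B - C * q ^ i) / (1 - C * q ^ i))"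
    using chu_sum_eq_prod[OF q] by (simp add: qpoch_def prod_dividef)
  finally show ?thesis unfolding B_def C_def .
qed

lemma xi_series_at_q_pos:
  assumes q: "0 < q" "q < 1" and b: "b < 1 / q" and a: "0 < a" "a < q ^ v"
  shows "xi_series q v a b q > 0"
  unfolding xi_series_at_q[OF q a]
proof (rule prod_pos)
  fix i assume "i \<in> {..<v}"
  then have C: "1 < q / a * q ^ i" using one_less_lower_factor[OF q a] by simp
  have "b * q * q ^ v < q ^ v" using b q by (simp add: pos_less_divide_eq)
  moreover have "q ^ v \<le> q ^ Suc i" using q \<open>i \<in> {..<v}\<close> power_decreasing[of "Suc i" v q] by simp
  ultimately have "b * q ^ (v + 1) < q ^ Suc i" by (simp add: mult.commute)
  then have "b * q ^ (v + 1) / a < q / a * q ^ i" using a by (simp add: field_simps)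
  then show "0 < (b * q ^ (v + 1) / a - q / a * q ^ i) / (1 - q / a * q ^ i)"
    using C by (simp add: divide_neg_neg)
qed

(* The q-difference operator lowers the degree and shifts the parameters, as for the little
   q-Jacobi polynomials. *)
lemma xi_series_q_difference:
  fixes q a b z :: real
  assumes q: "0 < q" "q < 1" and a: "0 < a" "a < q ^ Suc n"
  shows "xi_series q (Suc n) a b z - xi_series q (Suc n) a b (q * z)
     = z * ((1 - 1 / q ^ Suc n) * (1 - b * q ^ (Suc n + 1) / a) / (1 - q / a)) * xi_series q n (a / q) (b * q) z"
    (is "_ = z * ?K * _")
proof -
  define t where "t k = qpoch (1 / q ^ Suc n) q k * qpoch (b * q ^ (Suc n + 1) / a) q k
              / (qpoch (q / a) q k * qpoch q q k)" for k
  have a': "0 < a / q" "a / q < q ^ n" using q a by (auto simp: field_simps)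
  have "xi_series q (Suc n) a b z - xi_series q (Suc n) a b (q * z) = (\<Sum>k\<le>Suc n. t k * (z ^ k - (q * z) ^ k))"
    unfolding xi_series_def t_def by (simp add: sum_subtractf[symmetric] right_diff_distrib)
  also have "\<dots> = (\<Sum>j\<le>n. t (Suc j) * (z ^ Suc j - (q * z) ^ Suc j))"
    by (subst sum.atMost_Suc_shift) simp
  also have "\<dots> = (\<Sum>j\<le>n. z * ?K * (qpoch (1 / q ^ n) q j * qpoch (b * q * q ^ (n + 1) / (a / q)) q j
              / (qpoch (q / (a / q)) q j * qpoch q q j) * z ^ j))"
  proof (rule sum.cong)
    fix j assume "j \<in> {..n}"
    have "(1 / q ^ Suc n) * q = 1 / q ^ n" "(b * q ^ (Suc n + 1) / a) * q = b * q * q ^ (n + 1) / (a / q)"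
      "(q / a) * q = q / (a / q)"
      using q a by (simp_all add: field_simps)
    then have shift: "qpoch (1 / q ^ Suc n) q (Suc j) = (1 - 1 / q ^ Suc n) * qpoch (1 / q ^ n) q j"
      "qpoch (b * q ^ (Suc n + 1) / a) q (Suc j) = (1 - b * q ^ (Suc n + 1) / a) * qpoch (b * q * q ^ (n + 1) / (a / q)) q j"
      "qpoch (q / a) q (Suc j) = (1 - q / a) * qpoch (q / (a / q)) q j"
      by (simp_all only: qpoch_Suc_shift)
    have cancel: "A * X1 * (B * X2) / (W * Y * (Q * r)) * (z * zj * r)
        = z * (A * B / W) * (X1 * X2 / (Y * Q) * zj)"
      if "W \<noteq> 0" "Y \<noteq> 0" "Q \<noteq> 0" "r \<noteq> 0" for A B W X1 X2 Y Q r zj :: real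
      using that by (simp add: field_simps)
    have power_diff: "z ^ Suc j - (q * z) ^ Suc j = z * z ^ j * (1 - q * q ^ j)"
      by (simp add: power_mult_distrib algebra_simps)
    have "1 - q / a \<noteq> 0" using one_less_lower_factor[OF q a, of 0] by auto
    moreover have "qpoch (q / (a / q)) q j \<noteq> 0"
      using one_less_lower_factor[OF q a'] \<open>j \<in> {..n}\<close> by (intro qpoch_ne_zero) auto
    moreover have "qpoch q q j \<noteq> 0" "1 - q * q ^ j \<noteq> 0"
      using q qpoch_pos_of_less_one[of q q j] qpoch_pos_of_less_one[of q q "Suc j"]
      by (auto simp: qpoch_Suc)
    ultimately show "t (Suc j) * (z ^ Suc j - (q * z) ^ Suc j) = z * ?K * (qpoch (1 / q ^ n) q j
        * qpoch (b * q * q ^ (n + 1) / (a / q)) q j / (qpoch (q / (a / q)) q j * qpoch q q j) * z ^ j)"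
      unfolding t_def shift qpoch_Suc[of q q j] power_diff by (intro cancel)
  qed simp
  also have "\<dots> = z * ?K * xi_series q n (a / q) (b * q) z"
    unfolding xi_series_def by (simp add: sum_distrib_left)
  finally show ?thesis .
qed

lemma xi_series_term_nonneg:
  fixes q a B z :: real
  assumes q: "0 < q" "q < 1" and a: "0 < a" "a < q ^ v" and "k \<le> v" "B \<le> 1" "0 \<le> z"
  shows "0 \<le> qpoch (1 / q ^ v) q k * qpoch B q k / (qpoch (q / a) q k * qpoch q q k) * z ^ k"
proof -
  have "0 \<le> qpoch (1 / q ^ v) q k / qpoch (q / a) q k"
    unfolding qpoch_def prod_dividef[symmetric]
  proof (rule prod_nonneg)
    fix i assume "i \<in> {..<k}"
    then have "i < v" using \<open>k \<le> v\<close> by simp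
    then have "q ^ v \<le> q ^ i" using q power_decreasing[of i v q] by simp
    then have "1 - 1 / q ^ v * q ^ i \<le> 0" using q by (simp add: field_simps)
    moreover have "1 - q / a * q ^ i < 0" using one_less_lower_factor[OF q a \<open>i < v\<close>] by simp
    ultimately show "0 \<le> (1 - 1 / q ^ v * q ^ i) / (1 - q / a * q ^ i)"
      by (rule divide_nonpos_neg)
  qed
  moreover have "0 \<le> qpoch B q k" "0 < qpoch q q k"
    using q assms(5,6) by (simp_all add: qpoch_nonneg_of_le_one qpoch_pos_of_less_one)
  ultimately have "0 \<le> qpoch (1 / q ^ v) q k / qpoch (q / a) q k * qpoch B q k / qpoch q q k * z ^ k"
    using \<open>0 \<le> z\<close> by (metis divide_nonneg_pos mult_nonneg_nonneg zero_le_power)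
  then show ?thesis by (metis divide_divide_eq_left times_divide_eq_left)
qed

lemma xi_series_increasing_at_powers:
  assumes q: "0 < q" "q < 1" and a: "0 < a" "a < q ^ Suc n" and "1 < b * q ^ (Suc n + 1) / a"
    and lowered_pos: "xi_series q n (a / q) (b * q) (q ^ (y + 1)) > 0"
  shows "xi_series q (Suc n) a b (q ^ (y + 1)) \<le> xi_series q (Suc n) a b (q ^ (Suc y + 1))"
proof -
  define K where "K = (1 - 1 / q ^ Suc n) * (1 - b * q ^ (Suc n + 1) / a) / (1 - q / a)"
  have "1 - 1 / q ^ Suc n < 0"
    using q power_strict_decreasing[of 0 "Suc n" q] by (simp add: field_simps)
  moreover have "1 - q / a < 0" using one_less_lower_factor[OF q a, of 0] by simp
  ultimately have "K < 0" unfolding K_def using \<open>1 < b * q ^ (Suc n + 1) / a\<close>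
    by (simp add: divide_pos_neg mult_neg_neg)
  then have "q ^ (y + 1) * K < 0" using q by (simp add: mult_pos_neg)
  moreover have "xi_series q (Suc n) a b (q ^ (y + 1)) - xi_series q (Suc n) a b (q * q ^ (y + 1))
      = q ^ (y + 1) * K * xi_series q n (a / q) (b * q) (q ^ (y + 1))"
    unfolding K_def by (rule xi_series_q_difference[OF q a])
  ultimately show ?thesis using lowered_pos mult_neg_pos by fastforce
qed

lemma xi_series_pos:
  assumes q: "0 < q" "q < 1" and "b < 1 / q" "0 < a" "a < q ^ v"
  shows "xi_series q v a b (q ^ (x + 1)) > 0"
  using assms(3-)
proof (induction v arbitrary: a b x)
  case 0
  then show ?case by (simp add: xi_series_def)
next
  case (Suc n)
  note a = Suc.prems(2,3)
  show ?case
  proof (cases "b * q ^ (Suc n + 1) / a \<le> 1")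
    case True
    have "qpoch (1 / q ^ Suc n) q 0 * qpoch (b * q ^ (Suc n + 1) / a) q 0
        / (qpoch (q / a) q 0 * qpoch q q 0) * (q ^ (x + 1)) ^ 0 \<le> xi_series q (Suc n) a b (q ^ (x + 1))"
      unfolding xi_series_def
      by (rule member_le_sum) (use xi_series_term_nonneg[OF q a _ True] q in auto)
    then show ?thesis by simp
  next
    case False
    have "b * q < 1" using Suc.prems(1) q by (simp add: pos_less_divide_eq)
    then have "b * q < 1 / q" using q by (smt (verit) le_divide_eq_1_pos)
    moreover have "0 < a / q" "a / q < q ^ n" using q a by (auto simp: field_simps)
    ultimately have "xi_series q n (a / q) (b * q) (q ^ (y + 1)) > 0" for y
      using Suc.IH by blast
    then have "xi_series q (Suc n) a b (q ^ (y + 1)) \<le> xi_series q (Suc n) a b (q ^ (Suc y + 1))" for y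
      using False by (intro xi_series_increasing_at_powers[OF q a]) auto
    then have "xi_series q (Suc n) a b q \<le> xi_series q (Suc n) a b (q ^ (x + 1))"
      using lift_Suc_mono_le[of "\<lambda>y. xi_series q (Suc n) a b (q ^ (y + 1))" 0 x] by simp
    then show ?thesis using xi_series_at_q_pos[OF q Suc.prems] by linarith
  qed
qed

theorem mainTheorem2:
  fixes q a b :: real and v x :: nat
  assumes "0 < q" and "q < 1" and "b < 1 / q" and "0 < a" and "a < q ^ v"
  shows "xi_check q v x a b > 0"
proof -
  have "qpoch (a / q ^ v) q v > 0" "qpoch (b * q) q v > 0"
    using assms by (simp_all add: qpoch_pos_of_less_one pos_less_divide_eq)
  moreover have "xi_series q v a b (q ^ (x + 1)) > 0"
    using assms by (rule xi_series_pos)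
  ultimately show ?thesis unfolding xi_check_eq_xi_series by simp
qed

end
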